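(* Let $p$ be a prime, $m$ a positive integer, $q=p^m$, and $q-1=3s$ with $s$ a positive integer. Let $\gamma$ be a primitive element of $\mathbb{F}_q$ and $\xi=\gamma^s$ (so $\xi^3=1$, $\xi$ a primitive cube root of unity). Let $r$ be a positive integer and $f\in\mathbb{F}_q[x]$ with $f(x)\equiv ax^2+bx+c\pmod{x^3-1}$ for some $a,b,c\in\mathbb{F}_q$ satisfying $a^2+b^2+c^2-ab-bc-ca=1$. Let $A_i=f(\xi^i)$ for $i=0,1,2$ and $P(x)=x^rf(x^s)$. Then $P(x)$ is a permutation polynomial of $\mathbb{F}_q$ if and only if $\gcd(r,s)=1$, $A_i\neq0$ for $i=0,1,2$, $A_0^s=1$, $3\mid\mathrm{Ind}_\gamma(A_0)$, and $3\nmid r+\mathrm{Ind}_\gamma(A_2^2)$.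
   Context: A permutation polynomial of $\mathbb{F}_q$ is one inducing a bijection of $\mathbb{F}_q$. For nonzero $a\in\mathbb{F}_q$, $\mathrm{Ind}_\gamma(a)$ is the residue class $b\bmod(q-1)$ with $a=\gamma^b$; divisibility by $3$ is well defined since $3\mid q-1$. *)

theory Defs
  imports "HOL-Computational_Algebra.Polynomial" "HOL-Computational_Algebra.Primes"
begin

definition primitive_elem :: "'a::{field,finite} \<Rightarrow> bool" where
  "primitive_elem g \<longleftrightarrow> g \<noteq> 0 \<and> (\<forall>x. x \<noteq> 0 \<longrightarrow> (\<exists>k::nat. x = g ^ k))"

definition Ind :: "'a::{field,finite} \<Rightarrow> 'a \<Rightarrow> nat" where
  "Ind g a = (LEAST b::nat. g ^ b = a)"

definition perm_poly :: "'a::{field,finite} poly \<Rightarrow> bool" where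
  "perm_poly P \<longleftrightarrow> bij (\<lambda>x. poly P x)"

end

theory Submission
  imports Defs
begin

(* Put \<zeta> = \<gamma>^s; as q - 1 = d s, it generates the d-th roots of unity (here d = 3).
  For x = \<gamma>^k one has P(x) = \<gamma>^(k r) f(\<zeta>^k), and P(x)^s = \<zeta>^(k r) f(\<zeta>^k)^s depends only
  on k mod d. So if gcd(r, s) = 1, f has no zero on the d-th roots of unity and x^r f(x)^s
  permutes them, then P(x) determines k mod d and then k r mod q - 1, hence k mod q - 1.
  Conversely, a common factor g of r and s gives the collision P(\<gamma>^(d s/g)) = P(1), and
  surjectivity of P makes x^r f(x)^s hit every d-th root of unity.
  For d = 3 the values A_i = f(\<zeta>^i) = a \<zeta>^(2i) + b \<zeta>^i + c satisfy A_1 A_2 =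
  a^2 + b^2 + c^2 - ab - bc - ca = 1, so the cube roots of unity B_i = \<zeta>^(i r) A_i^s have
  B_1 B_2 = 1, and such B_0, B_1, B_2 are distinct iff B_0 = 1 and B_1 <> 1. Finally
  B_0 = A_0^s, and B_1 = \<zeta>^(r + Ind(A_2^2)) since A_1^s = A_2^(-s) = A_2^(2s). *)

lemma power_mod_eq_if_power_eq_one:
  fixes z :: "'a::monoid_mult"
  assumes "z ^ n = 1"
  shows "z ^ (k mod n) = z ^ k"
proof -
  have "z ^ k = z ^ (n * (k div n) + k mod n)"
    by simp
  also have "\<dots> = (z ^ n) ^ (k div n) * z ^ (k mod n)"
    by (simp only: power_add power_mult)
  finally show ?thesis
    using assms by simp
qed

lemma power_power_commute: "(a ^ m) ^ n = (a ^ n) ^ m" for a :: "'a::monoid_mult"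
  unfolding power_mult[symmetric] by (simp add: mult.commute)

lemma field_power_card_minus_one:
  fixes x :: "'a::{field,finite}"
  assumes "x \<noteq> 0"
  shows "x ^ (card (UNIV :: 'a set) - 1) = 1"
proof -
  have "(\<Prod>y\<in>UNIV-{0}. x * y) = (\<Prod>y\<in>UNIV-{0::'a}. y)"
    by (rule prod.reindex_bij_witness[of _ "\<lambda>y. y / x" "\<lambda>y. x * y"]) (use assms in auto)
  then show ?thesis
    by (simp add: prod.distrib card_Diff_singleton)
qed

lemma power_Ind:
  assumes "primitive_elem \<gamma>" and "x \<noteq> 0"
  shows "\<gamma> ^ Ind \<gamma> x = x"
proof -
  obtain k where "\<gamma> ^ k = x"
    using assms unfolding primitive_elem_def by blast
  then show ?thesis
    unfolding Ind_def by (rule LeastI)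
qed

lemma primitive_elem_power_eq_iff:
  fixes \<gamma> :: "'a::{field,finite}"
  assumes "primitive_elem \<gamma>"
  shows "\<gamma> ^ i = \<gamma> ^ j \<longleftrightarrow>
    i mod (card (UNIV :: 'a set) - 1) = j mod (card (UNIV :: 'a set) - 1)"
proof -
  define n where "n = card (UNIV :: 'a set) - 1"
  have n_eq: "n = card (UNIV - {0 :: 'a})"
    by (simp add: n_def card_Diff_singleton)
  have "\<gamma> \<noteq> 0" and generates: "\<And>x. x \<noteq> 0 \<Longrightarrow> \<exists>k. x = \<gamma> ^ k"
    using assms by (auto simp: primitive_elem_def)
  have reduce: "\<gamma> ^ (k mod n) = \<gamma> ^ k" for k
    by (rule power_mod_eq_if_power_eq_one)
      (unfold n_def, rule field_power_card_minus_one[OF \<open>\<gamma> \<noteq> 0\<close>])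
  have "card {1 :: 'a} \<le> n"
    unfolding n_eq by (rule card_mono) auto
  then have "n > 0"
    by simp
  have image_eq: "(\<lambda>k. \<gamma> ^ k) ` {..<n} = UNIV - {0}"
  proof
    show "(\<lambda>k. \<gamma> ^ k) ` {..<n} \<subseteq> UNIV - {0}"
      using \<open>\<gamma> \<noteq> 0\<close> by auto
    show "UNIV - {0} \<subseteq> (\<lambda>k. \<gamma> ^ k) ` {..<n}"
    proof
      fix x :: 'a assume "x \<in> UNIV - {0}"
      then obtain k where "x = \<gamma> ^ k"
        using generates by blast
      then have "x = \<gamma> ^ (k mod n)"
        by (simp only: reduce)
      moreover have "k mod n < n"
        using \<open>n > 0\<close> by simp
      ultimately show "x \<in> (\<lambda>k. \<gamma> ^ k) ` {..<n}"
        by blast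
    qed
  qed
  have inj: "inj_on (\<lambda>k. \<gamma> ^ k) {..<n}"
  proof (rule eq_card_imp_inj_on)
    show "card ((\<lambda>k. \<gamma> ^ k) ` {..<n}) = card {..<n}"
      unfolding image_eq by (simp add: n_eq)
  qed simp
  have "\<gamma> ^ (i mod n) = \<gamma> ^ (j mod n) \<longleftrightarrow> i mod n = j mod n"
    using \<open>n > 0\<close> inj_onD[OF inj, of "i mod n" "j mod n"] by auto
  then show ?thesis
    unfolding n_def[symmetric] reduce .
qed

lemma mod_eq_if_mult_coprime_mod_eq:
  fixes i j d s r :: nat
  assumes "coprime r s" and "i mod d = j mod d"
    and "(i * r) mod (d * s) = (j * r) mod (d * s)"
  shows "i mod (d * s) = j mod (d * s)"
proof -
  have "int i mod int d = int j mod int d"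
    using assms(2) by (simp only: of_nat_mod[symmetric])
  then have "int d dvd int i - int j"
    by (simp add: mod_eq_dvd_iff)
  then obtain e where e: "int i - int j = int d * e" ..
  have "int (i * r) mod int (d * s) = int (j * r) mod int (d * s)"
    using assms(3) by (simp only: of_nat_mod[symmetric])
  then have "int d * int s dvd (int i - int j) * int r"
    by (simp add: mod_eq_dvd_iff left_diff_distrib)
  then have "int d * int s dvd int d * (e * int r)"
    by (simp add: e mult.assoc)
  then have "int s dvd e \<or> d = 0"
    using assms(1) by (auto simp: coprime_dvd_mult_left_iff coprime_commute)
  then have "int d * int s dvd int i - int j"
    using e by auto
  then have "int i mod int (d * s) = int j mod int (d * s)"
    by (simp add: mod_eq_dvd_iff)
  then show ?thesis
    by (simp only: of_nat_mod[symmetric] of_nat_eq_iff)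
qed

lemma cube_root_of_unity_sum_eq_zero:
  fixes v :: "'a::idom"
  assumes "v ^ 3 = 1" and "v \<noteq> 1"
  shows "v ^ 2 + v + 1 = 0"
proof -
  have "(v - 1) * (v ^ 2 + v + 1) = v ^ 3 - 1"
    by (simp add: algebra_simps eval_nat_numeral)
  with assms show ?thesis
    by simp
qed

lemma cube_root_of_unity_cases:
  fixes u v :: "'a::idom"
  assumes "v ^ 3 = 1" and "v \<noteq> 1" and "u ^ 3 = 1"
  shows "u = 1 \<or> u = v \<or> u = v ^ 2"
proof -
  have "v ^ 2 + v + 1 = 0"
    using assms(1,2) by (rule cube_root_of_unity_sum_eq_zero)
  moreover have "(u - 1) * (u - v) * (u - v ^ 2) = u ^ 3 - v ^ 3 - (v ^ 2 + v + 1) * (u ^ 2 - v * u)"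
    by (simp add: algebra_simps eval_nat_numeral)
  ultimately have "(u - 1) * (u - v) * (u - v ^ 2) = 0"
    using assms(1,3) by simp
  then show ?thesis
    by simp
qed

lemma distinct_cube_roots_of_unity_iff:
  fixes u v w :: "'a::idom"
  assumes "u ^ 3 = 1" and "v ^ 3 = 1" and "v * w = 1"
  shows "u \<noteq> v \<and> u \<noteq> w \<and> v \<noteq> w \<longleftrightarrow> u = 1 \<and> v \<noteq> 1"
proof -
  have "v \<noteq> 0"
    using assms(2) by auto
  moreover have "v * w = v * v ^ 2"
    using assms(2,3) by (simp add: eval_nat_numeral)
  ultimately have w: "w = v ^ 2"
    by simp
  show ?thesis
  proof
    assume distinct: "u \<noteq> v \<and> u \<noteq> w \<and> v \<noteq> w"
    then have "v \<noteq> 1"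
      using w by auto
    then show "u = 1 \<and> v \<noteq> 1"
      using cube_root_of_unity_cases[OF assms(2) _ assms(1)] distinct w by auto
  next
    assume "u = 1 \<and> v \<noteq> 1"
    moreover have "v ^ 2 \<noteq> 1" and "v ^ 2 \<noteq> v"
      using \<open>u = 1 \<and> v \<noteq> 1\<close> assms(2,3) w by (auto simp: eval_nat_numeral)
    ultimately show "u \<noteq> v \<and> u \<noteq> w \<and> v \<noteq> w"
      using w by auto
  qed
qed

lemma norm_form_at_cube_root:
  fixes \<xi> a b c :: "'a::comm_ring_1"
  assumes "\<xi> ^ 2 + \<xi> + 1 = 0"
  shows "(a * \<xi> ^ 2 + b * \<xi> + c) * (a * \<xi> + b * \<xi> ^ 2 + c) = a^2 + b^2 + c^2 - a*b - b*c - c*a"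
proof -
  have "(a * \<xi> ^ 2 + b * \<xi> + c) * (a * \<xi> + b * \<xi> ^ 2 + c) = a^2 + b^2 + c^2 - a*b - b*c - c*a
      + (\<xi> ^ 2 + \<xi> + 1) * ((a^2 + b^2) * (\<xi> - 1) + a*b * (\<xi> ^ 2 - \<xi> + 1) + a*c + b*c)"
    by (simp add: algebra_simps eval_nat_numeral)
  with assms show ?thesis
    by simp
qed

lemma poly_at_cube_roots_mult:
  fixes \<xi> a b c :: "'a::field"
  assumes "\<xi> ^ 3 = 1" and "\<xi> \<noteq> 1" and "f mod [:-1, 0, 0, 1:] = [:c, b, a:]"
  shows "poly f \<xi> * poly f (\<xi> ^ 2) = a^2 + b^2 + c^2 - a*b - b*c - c*a"
proof -
  have at_root: "poly f z = a * z ^ 2 + b * z + c" if "z ^ 3 = 1" for z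
  proof -
    have "poly [:-1, 0, 0, 1:] z = 0"
      using that by (simp add: algebra_simps eval_nat_numeral)
    then have "poly f z = poly [:c, b, a:] z"
      using poly_mod[of "[:-1, 0, 0, 1:]" z f] assms(3) by simp
    then show ?thesis
      by (simp add: algebra_simps power2_eq_square)
  qed
  have "(\<xi> ^ 2) ^ 3 = 1"
    unfolding power_power_commute[of \<xi> 2 3] using assms(1) by simp
  moreover have "(\<xi> ^ 2) ^ 2 = \<xi>"
    using assms(1) by (simp add: eval_nat_numeral)
  ultimately show ?thesis
    using at_root[of \<xi>] at_root[of "\<xi> ^ 2"] assms(1) norm_form_at_cube_root[of \<xi> a b c]
      cube_root_of_unity_sum_eq_zero[OF assms(1,2)] by (simp add: add.commute)
qed

lemma poly_monom_pcompose_zero: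
  fixes h :: "'a::comm_semiring_1 poly"
  assumes "r > 0"
  shows "poly (monom 1 r * pcompose h (monom 1 s)) 0 = 0"
  using assms by (simp add: poly_monom zero_power)

locale primitive_elem_split =
  fixes \<gamma> :: "'a::{field,finite}" and d s :: nat
  assumes primitive: "primitive_elem \<gamma>"
    and card_minus_one_eq: "card (UNIV :: 'a set) - 1 = d * s"
    and s_pos: "s > 0"
begin

lemma nonzero: "\<gamma> \<noteq> 0"
  and generates: "x \<noteq> 0 \<Longrightarrow> \<exists>k. x = \<gamma> ^ k"
  using primitive by (auto simp: primitive_elem_def)

lemma power_eq_iff: "\<gamma> ^ i = \<gamma> ^ j \<longleftrightarrow> i mod (d * s) = j mod (d * s)"
  unfolding card_minus_one_eq[symmetric] by (rule primitive_elem_power_eq_iff[OF primitive])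

lemma d_pos: "d > 0"
proof -
  have "card {0 :: 'a, 1} \<le> card (UNIV :: 'a set)"
    by (rule card_mono) auto
  then show ?thesis
    using card_minus_one_eq by (cases d) auto
qed

lemma root_power_eq_one_iff: "(\<gamma> ^ s) ^ k = 1 \<longleftrightarrow> d dvd k"
proof -
  have "(\<gamma> ^ s) ^ k = \<gamma> ^ 0 \<longleftrightarrow> d * s dvd s * k"
    unfolding power_mult[symmetric] power_eq_iff by (simp add: mod_eq_0_iff_dvd)
  also have "\<dots> \<longleftrightarrow> d dvd k"
    using s_pos by (simp add: mult.commute)
  finally show ?thesis
    by simp
qed

lemma root_power_d: "(\<gamma> ^ s) ^ d = 1"
  using root_power_eq_one_iff[of d] by simp

lemma power_s_eq_root_power_Ind:
  assumes "x \<noteq> 0"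
  shows "x ^ s = (\<gamma> ^ s) ^ Ind \<gamma> x"
proof -
  have "x ^ s = (\<gamma> ^ Ind \<gamma> x) ^ s"
    using power_Ind[OF primitive assms] by simp
  also have "\<dots> = (\<gamma> ^ s) ^ Ind \<gamma> x"
    by (rule power_power_commute)
  finally show ?thesis .
qed

lemma power_s_eq_one_iff_dvd_Ind:
  assumes "x \<noteq> 0"
  shows "x ^ s = 1 \<longleftrightarrow> d dvd Ind \<gamma> x"
  unfolding power_s_eq_root_power_Ind[OF assms] by (rule root_power_eq_one_iff)

lemma power_d_mult_s_eq_one:
  fixes x :: 'a
  assumes "x \<noteq> 0"
  shows "x ^ (d * s) = 1"
  using field_power_card_minus_one[OF assms] by (simp only: card_minus_one_eq)

lemma power_s_of_inverse:
  fixes x y :: 'a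
  assumes "x \<noteq> 0" and "y * x = 1"
  shows "y ^ s = (x ^ (d - 1)) ^ s"
proof -
  have "d * s = s + (d - 1) * s"
    using d_pos by (cases d) simp_all
  then have "x ^ s * (x ^ (d - 1)) ^ s = 1"
    using power_d_mult_s_eq_one[OF assms(1)] by (simp only: power_add power_mult)
  then have "y ^ s = (y * x) ^ s * (x ^ (d - 1)) ^ s"
    by (simp only: power_mult_distrib mult.assoc mult_1_right)
  with assms(2) show ?thesis
    by simp
qed

lemma root_power_mod: "(\<gamma> ^ s) ^ (k mod d) = (\<gamma> ^ s) ^ k"
  by (rule power_mod_eq_if_power_eq_one) (rule root_power_d)

lemma poly_at_power:
  fixes h :: "'a poly"
  shows "poly (monom 1 r * pcompose h (monom 1 s)) (\<gamma> ^ k)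
     = \<gamma> ^ (k * r) * poly h ((\<gamma> ^ s) ^ (k mod d))"
proof -
  have "(\<gamma> ^ k) ^ s = (\<gamma> ^ s) ^ (k mod d)"
    unfolding root_power_mod by (rule power_power_commute)
  then show ?thesis
    by (simp add: poly_monom poly_pcompose power_mult)
qed

definition root_map :: "nat \<Rightarrow> 'a poly \<Rightarrow> nat \<Rightarrow> 'a" where
  "root_map r h t = (\<gamma> ^ s) ^ (t * r) * poly h ((\<gamma> ^ s) ^ t) ^ s"

lemma root_map_power_d:
  assumes "poly h ((\<gamma> ^ s) ^ t) \<noteq> 0"
  shows "root_map r h t ^ d = 1"
proof -
  have "((\<gamma> ^ s) ^ (t * r)) ^ d = ((\<gamma> ^ s) ^ d) ^ (t * r)"
    by (rule power_power_commute)
  moreover have "(poly h ((\<gamma> ^ s) ^ t) ^ s) ^ d = poly h ((\<gamma> ^ s) ^ t) ^ (d * s)"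
    by (simp only: power_power_commute[of _ s d] power_mult)
  ultimately show ?thesis
    using power_d_mult_s_eq_one[OF assms] root_power_d
    by (simp add: root_map_def power_mult_distrib)
qed

lemma root_map_mult_eq_one:
  assumes "t + u = d" and "poly h ((\<gamma> ^ s) ^ t) * poly h ((\<gamma> ^ s) ^ u) = 1"
  shows "root_map r h t * root_map r h u = 1"
proof -
  have "(\<gamma> ^ s) ^ (d * r) = 1"
    by (simp add: power_mult root_power_d)
  moreover have "t * r + u * r = d * r"
    using assms(1) by (simp flip: add_mult_distrib)
  ultimately have "(\<gamma> ^ s) ^ (t * r) * (\<gamma> ^ s) ^ (u * r) = 1"
    by (simp only: power_add[symmetric])
  moreover have "root_map r h t * root_map r h u
      = ((\<gamma> ^ s) ^ (t * r) * (\<gamma> ^ s) ^ (u * r))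
        * (poly h ((\<gamma> ^ s) ^ t) * poly h ((\<gamma> ^ s) ^ u)) ^ s"
    by (simp only: root_map_def power_mult_distrib mult_ac)
  ultimately show ?thesis
    using assms(2) by simp
qed

lemma poly_at_power_power_s:
  fixes h :: "'a poly"
  shows "poly (monom 1 r * pcompose h (monom 1 s)) (\<gamma> ^ k) ^ s = root_map r h (k mod d)"
proof -
  have "(\<gamma> ^ (k * r)) ^ s = (\<gamma> ^ s) ^ (k * r)"
    by (rule power_power_commute)
  also have "\<dots> = (\<gamma> ^ s) ^ ((k * r) mod d)"
    by (rule root_power_mod[symmetric])
  also have "\<dots> = (\<gamma> ^ s) ^ ((k mod d * r) mod d)"
    by (simp only: mod_mult_left_eq)
  also have "\<dots> = (\<gamma> ^ s) ^ (k mod d * r)"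
    by (rule root_power_mod)
  finally show ?thesis
    unfolding poly_at_power power_mult_distrib root_map_def by simp
qed

lemma coprime_if_inj:
  fixes h :: "'a poly"
  assumes "inj (poly (monom 1 r * pcompose h (monom 1 s)))"
  shows "coprime r s"
proof (rule ccontr)
  assume "\<not> coprime r s"
  define g where "g = gcd r s"
  have "g \<noteq> 0" "g \<noteq> 1"
    using \<open>\<not> coprime r s\<close> s_pos by (simp_all add: g_def coprime_iff_gcd_eq_1)
  then have "g > 1"
    by simp
  obtain s' r' where s': "s = g * s'" and r': "r = g * r'"
    using gcd_dvd1[of r s] gcd_dvd2[of r s] unfolding g_def dvd_def by blast
  define t where "t = d * s'"
  have "0 < t" "t < d * s"
    using \<open>g > 1\<close> s_pos d_pos by (simp_all add: t_def s')
  have "t * r = d * s * r'"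
    by (simp add: t_def s' r')
  then have "\<gamma> ^ (t * r) = \<gamma> ^ (0 * r)"
    unfolding power_eq_iff by simp
  moreover have "t mod d = 0 mod d"
    by (simp add: t_def)
  ultimately have "poly (monom 1 r * pcompose h (monom 1 s)) (\<gamma> ^ t)
      = poly (monom 1 r * pcompose h (monom 1 s)) (\<gamma> ^ 0)"
    by (simp only: poly_at_power)
  then have "\<gamma> ^ t = \<gamma> ^ 0"
    by (rule injD[OF assms])
  then show False
    using \<open>0 < t\<close> \<open>t < d * s\<close> unfolding power_eq_iff by simp
qed

lemma poly_nonzero_at_roots_if_inj:
  fixes h :: "'a poly"
  assumes "r > 0" and "inj (poly (monom 1 r * pcompose h (monom 1 s)))" and "t < d"
  shows "poly h ((\<gamma> ^ s) ^ t) \<noteq> 0"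
proof
  assume "poly h ((\<gamma> ^ s) ^ t) = 0"
  then have "poly (monom 1 r * pcompose h (monom 1 s)) (\<gamma> ^ t)
      = poly (monom 1 r * pcompose h (monom 1 s)) 0"
    unfolding poly_at_power poly_monom_pcompose_zero[OF \<open>r > 0\<close>] using \<open>t < d\<close> by simp
  then have "\<gamma> ^ t = 0"
    by (rule injD[OF assms(2)])
  then show False
    using nonzero by simp
qed

lemma inj_on_root_map_if_surj:
  fixes h :: "'a poly"
  assumes "r > 0" and "surj (poly (monom 1 r * pcompose h (monom 1 s)))"
  shows "inj_on (root_map r h) {..<d}"
    (is "inj_on ?B _")
proof (rule eq_card_imp_inj_on)
  have "(\<lambda>u. (\<gamma> ^ s) ^ u) ` {..<d} \<subseteq> ?B ` {..<d}"
  proof clarify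
    fix u assume "u < d"
    obtain x where x: "\<gamma> ^ u = poly (monom 1 r * pcompose h (monom 1 s)) x"
      using surjD[OF assms(2)] by blast
    have "x \<noteq> 0"
      using x nonzero poly_monom_pcompose_zero[OF \<open>r > 0\<close>, of h s] by auto
    then obtain k where k: "x = \<gamma> ^ k"
      using generates by blast
    have "?B (k mod d) = poly (monom 1 r * pcompose h (monom 1 s)) (\<gamma> ^ k) ^ s"
      by (simp only: poly_at_power_power_s)
    also have "\<dots> = (\<gamma> ^ u) ^ s"
      by (simp only: x k)
    also have "\<dots> = (\<gamma> ^ s) ^ u"
      by (rule power_power_commute)
    finally have "(\<gamma> ^ s) ^ u = ?B (k mod d)" ..
    moreover have "k mod d \<in> {..<d}"
      using d_pos by simp
    ultimately show "(\<gamma> ^ s) ^ u \<in> ?B ` {..<d}"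
      by (rule rev_image_eqI[rotated])
  qed
  moreover have "inj_on (\<lambda>u. (\<gamma> ^ s) ^ u) {..<d}"
  proof (rule inj_onI)
    fix u v assume "u \<in> {..<d}" "v \<in> {..<d}" "(\<gamma> ^ s) ^ u = (\<gamma> ^ s) ^ v"
    then have "(s * u) mod (d * s) = (s * v) mod (d * s)" and "s * u < d * s" "s * v < d * s"
      using s_pos by (simp_all only: power_eq_iff flip: power_mult) simp_all
    then show "u = v"
      using s_pos by simp
  qed
  ultimately have "d \<le> card (?B ` {..<d})"
    using card_mono[of "?B ` {..<d}" "(\<lambda>u. (\<gamma> ^ s) ^ u) ` {..<d}"] by (simp add: card_image)
  then show "card (?B ` {..<d}) = card {..<d}"
    using card_image_le[of "{..<d}" ?B] by simp
qed simp

lemma inj_if_coprime_and_inj_on_root_map: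
  fixes h :: "'a poly"
  assumes "r > 0" and "coprime r s"
    and no_root: "\<And>t. t < d \<Longrightarrow> poly h ((\<gamma> ^ s) ^ t) \<noteq> 0"
    and inj_on_root_map: "inj_on (root_map r h) {..<d}"
  shows "inj (poly (monom 1 r * pcompose h (monom 1 s)))" (is "inj (poly ?P)")
proof (rule injI)
  have nonzero_at_power: "poly ?P (\<gamma> ^ k) \<noteq> 0" for k
    unfolding poly_at_power using no_root[of "k mod d"] d_pos nonzero by simp
  fix x y assume eq: "poly ?P x = poly ?P y"
  show "x = y"
  proof (cases "x = 0 \<or> y = 0")
    case True
    then show ?thesis
      using eq generates nonzero_at_power poly_monom_pcompose_zero[OF \<open>r > 0\<close>, of h s] by metis
  next
    case False
    then obtain i j where x: "x = \<gamma> ^ i" and y: "y = \<gamma> ^ j"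
      using generates by blast
    have "poly ?P (\<gamma> ^ i) ^ s = poly ?P (\<gamma> ^ j) ^ s"
      using eq by (simp only: x y)
    then have "i mod d = j mod d"
      unfolding poly_at_power_power_s
      using inj_onD[OF inj_on_root_map, of "i mod d" "j mod d"] d_pos by simp
    moreover from this have "\<gamma> ^ (i * r) = \<gamma> ^ (j * r)"
      using eq no_root[of "i mod d"] d_pos unfolding x y poly_at_power by simp
    ultimately have "i mod (d * s) = j mod (d * s)"
      using \<open>coprime r s\<close> mod_eq_if_mult_coprime_mod_eq unfolding power_eq_iff by blast
    then show "x = y"
      unfolding x y power_eq_iff .
  qed
qed

theorem perm_poly_iff:
  fixes h :: "'a poly"
  assumes "r > 0"
  shows "perm_poly (monom 1 r * pcompose h (monom 1 s)) \<longleftrightarrow>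
    coprime r s \<and> (\<forall>t<d. poly h ((\<gamma> ^ s) ^ t) \<noteq> 0) \<and>
    inj_on (root_map r h) {..<d}"
    (is "perm_poly ?P \<longleftrightarrow> ?criterion")
proof -
  have "perm_poly ?P \<longleftrightarrow> inj (poly ?P)"
    unfolding perm_poly_def bij_def using finite_UNIV_inj_surj[OF finite_UNIV] by blast
  also have "\<dots> \<longleftrightarrow> ?criterion"
  proof
    assume inj: "inj (poly ?P)"
    show ?criterion
      using coprime_if_inj[OF inj] poly_nonzero_at_roots_if_inj[OF assms inj]
        inj_on_root_map_if_surj[OF assms finite_UNIV_inj_surj[OF finite_UNIV inj]] by blast
  next
    assume ?criterion
    then show "inj (poly ?P)"
      using inj_if_coprime_and_inj_on_root_map[OF assms] by blast
  qed
  finally show ?thesis .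
qed

end

locale primitive_elem_cube_split = primitive_elem_split \<gamma> 3 s
  for \<gamma> :: "'a::{field,finite}" and s
begin

lemma root_cube: "(\<gamma> ^ s) ^ 3 = 1" and root_ne_one: "\<gamma> ^ s \<noteq> 1"
  using root_power_eq_one_iff[of 3] root_power_eq_one_iff[of 1] by simp_all

lemma root_map_one:
  assumes "poly h (\<gamma> ^ s) * poly h ((\<gamma> ^ s) ^ 2) = 1"
  shows "root_map r h 1 = (\<gamma> ^ s) ^ (r + Ind \<gamma> (poly h ((\<gamma> ^ s) ^ 2) ^ 2))"
proof -
  have "poly h ((\<gamma> ^ s) ^ 2) \<noteq> 0"
    using assms by auto
  then have "poly h (\<gamma> ^ s) ^ s = (\<gamma> ^ s) ^ Ind \<gamma> (poly h ((\<gamma> ^ s) ^ 2) ^ 2)"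
    using power_s_of_inverse[OF _ assms] power_s_eq_root_power_Ind[of "poly h ((\<gamma> ^ s) ^ 2) ^ 2"]
    by simp
  then show ?thesis
    by (simp add: root_map_def power_add)
qed

lemma inj_on_root_map_iff:
  assumes nonzero: "\<forall>t<3. poly h ((\<gamma> ^ s) ^ t) \<noteq> 0"
    and norm: "poly h (\<gamma> ^ s) * poly h ((\<gamma> ^ s) ^ 2) = 1"
  shows "inj_on (root_map r h) {..<3} \<longleftrightarrow>
    poly h 1 ^ s = 1 \<and> \<not> 3 dvd (r + Ind \<gamma> (poly h ((\<gamma> ^ s) ^ 2) ^ 2))"
proof -
  have "{..<3} = {0, 1, 2 :: nat}"
    by auto
  then have "inj_on (root_map r h) {..<3} \<longleftrightarrow>
      root_map r h 0 \<noteq> root_map r h 1 \<and> root_map r h 0 \<noteq> root_map r h 2 \<and>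
      root_map r h 1 \<noteq> root_map r h 2"
    by (auto simp: inj_on_insert insert_Diff_if)
  also have "\<dots> \<longleftrightarrow> root_map r h 0 = 1 \<and> root_map r h 1 \<noteq> 1"
  proof (rule distinct_cube_roots_of_unity_iff)
    show "root_map r h 0 ^ 3 = 1"
      by (rule root_map_power_d) (use nonzero[rule_format, of 0] in simp)
    show "root_map r h 1 ^ 3 = 1"
      by (rule root_map_power_d) (use nonzero[rule_format, of 1] in simp)
    show "root_map r h 1 * root_map r h 2 = 1"
      using root_map_mult_eq_one[where t = 1 and u = 2] norm by simp
  qed
  finally show ?thesis
    using root_map_one[OF norm] root_power_eq_one_iff by (simp add: root_map_def)
qed

theorem perm_poly_iff_cube:
  fixes h :: "'a poly"
  assumes "r > 0" and norm: "poly h (\<gamma> ^ s) * poly h ((\<gamma> ^ s) ^ 2) = 1"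
  shows "perm_poly (monom 1 r * pcompose h (monom 1 s)) \<longleftrightarrow>
    coprime r s \<and> (\<forall>t<3. poly h ((\<gamma> ^ s) ^ t) \<noteq> 0) \<and> poly h 1 ^ s = 1 \<and>
    3 dvd Ind \<gamma> (poly h 1) \<and> \<not> 3 dvd (r + Ind \<gamma> (poly h ((\<gamma> ^ s) ^ 2) ^ 2))"
proof (cases "\<forall>t<3. poly h ((\<gamma> ^ s) ^ t) \<noteq> 0")
  case True
  then have "poly h 1 \<noteq> 0"
    using True[rule_format, of 0] by simp
  then show ?thesis
    using perm_poly_iff[OF \<open>r > 0\<close>] inj_on_root_map_iff[OF True norm]
      power_s_eq_one_iff_dvd_Ind[of "poly h 1"] by auto
qed (use perm_poly_iff[OF \<open>r > 0\<close>] in blast)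

end

theorem theorem3p4:
  fixes p m s r :: nat and \<gamma> a b c :: "'a::{field,finite}" and f :: "'a poly"
  assumes "prime p" and "m > 0" and "card (UNIV :: 'a set) = p ^ m"
    and "card (UNIV :: 'a set) - 1 = 3 * s" and "s > 0"
    and "primitive_elem \<gamma>"
    and "r > 0"
    and "f mod [:-1, 0, 0, 1:] = [:c, b, a:]"
    and "a^2 + b^2 + c^2 - a*b - b*c - c*a = 1"
  shows "perm_poly (monom 1 r * pcompose f (monom 1 s)) \<longleftrightarrow>
    (gcd r s = 1 \<and> (\<forall>i\<in>{0,1,2::nat}. poly f ((\<gamma>^s)^i) \<noteq> 0)
     \<and> (poly f 1) ^ s = 1
     \<and> 3 dvd Ind \<gamma> (poly f 1)
     \<and> \<not> 3 dvd (r + Ind \<gamma> ((poly f ((\<gamma>^s)^2))^2)))"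
proof -
  interpret primitive_elem_cube_split \<gamma> s
    by unfold_locales (use assms(4-6) in auto)
  have "poly f (\<gamma> ^ s) * poly f ((\<gamma> ^ s) ^ 2) = 1"
    using poly_at_cube_roots_mult[OF root_cube root_ne_one assms(8)] assms(9) by simp
  moreover have "(\<forall>t<3. P t) \<longleftrightarrow> (\<forall>t\<in>{0, 1, 2}. P t)" for P :: "nat \<Rightarrow> bool"
    by (auto simp: less_Suc_eq numeral_3_eq_3 numeral_2_eq_2)
  ultimately show ?thesis
    using perm_poly_iff_cube[OF \<open>r > 0\<close>] by (simp add: coprime_iff_gcd_eq_1)
qed

end
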